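(* Let $B$ be a minimum-weight basis of the weighted uncertainty matroid $\mathcal{M}=(E,\mathcal{I},A,w)$. For $e\in E\setminus B$, let $C_e$ be the fundamental circuit of $e$ with respect to $B$, let $F_e=\{f\in C_e\setminus\{e\}: U_f>L_e\}$ and $\hat F_e=\{f\in C_e\setminus\{e\}: U_f>w_e\}$. A set $Q\subseteq E$ is a certificate of $B$ if and only if for every $e\in E\setminus B$ the following hold: 1. If $w_e\ge U_f$ for all $f\in C_e\setminus\{e\}$, and there exists $f'\in C_e\setminus\{e\}$ with $w_{f'}>L_e$, then $e\in Q$. 2. If $w_e\ge U_f$ for all $f\in C_e\setminus\{e\}$, and $w_f\le L_e$ for all $f\in C_e\setminus\{e\}$, then $e\in Q$ or $F_e\subseteq Q$. 3. If there exists $f\in C_e\setminus\{e\}$ with $w_e<U_f$, and there exists $f'\in C_e\setminus\{e\}$ (possibly $f'=f$) with $w_{f'}>L_e$, then $\hat F_e\cup\{e\}\subseteq Q$. 4. If there exists $f\in C_e\setminus\{e\}$ with $w_e<U_f$, and $w_{f'}\le L_e$ for all $f'\in C_e\setminus\{e\}$, then $F_e\subseteq Q$ or $\hat F_e\cup\{e\}\subseteq Q$.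
   Context: A weighted uncertainty matroid $\mathcal{M}=(E,\mathcal{I},A,w)$ consists of a matroid $M=(E,\mathcal{I})$ on a finite set $E$, for each $e\in E$ a non-empty finite union $A_e$ of bounded real intervals (each open or closed), and a weight $w_e\in A_e$. $L_e=\inf A_e$, $U_e=\sup A_e$. A minimum-weight basis is a basis of $M$ minimizing total weight. A weight assignment is $w^*$ with $w^*_e\in A_e$, consistent with $Q$ if $w^*_e=w_e$ on $Q$. $Q$ is a certificate of (verifies) a basis $B$ if for every weight assignment consistent with $Q$, $B$ is a minimum-weight basis with respect to it. For a basis $B$ and $e\notin B$, the fundamental circuit $C_e$ is the unique circuit contained in $B\cup\{e\}$. *)

theory Defs
  imports Complex_Main
begin

definition matroid :: "'a set \<Rightarrow> ('a set \<Rightarrow> bool) \<Rightarrow> bool" where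
  "matroid E indep \<longleftrightarrow>
     finite E \<and>
     (\<forall>X. indep X \<longrightarrow> X \<subseteq> E) \<and>
     indep {} \<and>
     (\<forall>X Y. indep Y \<and> X \<subseteq> Y \<longrightarrow> indep X) \<and>
     (\<forall>X Y. indep X \<and> indep Y \<and> card X < card Y \<longrightarrow> (\<exists>e\<in>Y - X. indep (insert e X)))"

definition basis :: "'a set \<Rightarrow> ('a set \<Rightarrow> bool) \<Rightarrow> 'a set \<Rightarrow> bool" where
  "basis E indep B \<longleftrightarrow> indep B \<and> (\<forall>X. indep X \<and> B \<subseteq> X \<longrightarrow> X = B)"

definition circuit :: "'a set \<Rightarrow> ('a set \<Rightarrow> bool) \<Rightarrow> 'a set \<Rightarrow> bool" where
  "circuit E indep C \<longleftrightarrow> C \<subseteq> E \<and> \<not> indep C \<and> (\<forall>X. X \<subset> C \<longrightarrow> indep X)"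

text \<open>Fundamental circuit of e (not in B) w.r.t. basis B: the unique circuit in B \<union> {e}.\<close>
definition fund_circuit :: "'a set \<Rightarrow> ('a set \<Rightarrow> bool) \<Rightarrow> 'a set \<Rightarrow> 'a \<Rightarrow> 'a set" where
  "fund_circuit E indep B e = (THE C. circuit E indep C \<and> C \<subseteq> insert e B)"

definition bounded_interval :: "real set \<Rightarrow> bool" where
  "bounded_interval I \<longleftrightarrow>
     (\<exists>a b. I = {a..b} \<or> I = {a<..b} \<or> I = {a..<b} \<or> I = {a<..<b})"

definition uncertainty_area :: "real set \<Rightarrow> bool" where
  "uncertainty_area S \<longleftrightarrow> S \<noteq> {} \<and>
     (\<exists>\<I>. finite \<I> \<and> (\<forall>I\<in>\<I>. bounded_interval I) \<and> S = \<Union>\<I>)"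

definition lower :: "('a \<Rightarrow> real set) \<Rightarrow> 'a \<Rightarrow> real" where
  "lower A e = Inf (A e)"

definition upper :: "('a \<Rightarrow> real set) \<Rightarrow> 'a \<Rightarrow> real" where
  "upper A e = Sup (A e)"

definition weighted_uncertainty_matroid ::
  "'a set \<Rightarrow> ('a set \<Rightarrow> bool) \<Rightarrow> ('a \<Rightarrow> real set) \<Rightarrow> ('a \<Rightarrow> real) \<Rightarrow> bool" where
  "weighted_uncertainty_matroid E indep A w \<longleftrightarrow>
     matroid E indep \<and> (\<forall>e\<in>E. uncertainty_area (A e) \<and> w e \<in> A e)"

definition min_weight_basis ::
  "'a set \<Rightarrow> ('a set \<Rightarrow> bool) \<Rightarrow> ('a \<Rightarrow> real) \<Rightarrow> 'a set \<Rightarrow> bool" where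
  "min_weight_basis E indep w B \<longleftrightarrow>
     basis E indep B \<and> (\<forall>B'. basis E indep B' \<longrightarrow> (\<Sum>e\<in>B. w e) \<le> (\<Sum>e\<in>B'. w e))"

definition weight_assignment :: "'a set \<Rightarrow> ('a \<Rightarrow> real set) \<Rightarrow> ('a \<Rightarrow> real) \<Rightarrow> bool" where
  "weight_assignment E A w' \<longleftrightarrow> (\<forall>e\<in>E. w' e \<in> A e)"

definition consistent_with ::
  "'a set \<Rightarrow> ('a \<Rightarrow> real set) \<Rightarrow> ('a \<Rightarrow> real) \<Rightarrow> 'a set \<Rightarrow> ('a \<Rightarrow> real) \<Rightarrow> bool" where
  "consistent_with E A w Q w' \<longleftrightarrow> weight_assignment E A w' \<and> (\<forall>e\<in>Q. w' e = w e)"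

definition certificate ::
  "'a set \<Rightarrow> ('a set \<Rightarrow> bool) \<Rightarrow> ('a \<Rightarrow> real set) \<Rightarrow> ('a \<Rightarrow> real) \<Rightarrow> 'a set \<Rightarrow> 'a set \<Rightarrow> bool" where
  "certificate E indep A w Q B \<longleftrightarrow>
     (\<forall>w'. consistent_with E A w Q w' \<longrightarrow> min_weight_basis E indep w' B)"

end

theory Submission
  imports Defs
begin

(* By the cycle criterion, a basis B has minimum weight iff every e outside B weighs at least
   as much as every other element f of its fundamental circuit C_e. So Q verifies B iff each
   comparison w' f \<le> w' e survives every assignment w' consistent with Q. The values of e
   and f can be chosen independently, so the worst case pits the supremum of w' f (w f if
   f \<in> Q, otherwise U_f) against the infimum of w' e (w e if e \<in> Q, otherwise L_e). The four
   conditions of the theorem are this inequality over C_e - {e}, split according to whether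
   e \<in> Q: then it says exactly that the elements of C_e with U_f > w_e are in Q; otherwise that
   w_f \<le> L_e on C_e - {e} and that the elements with U_f > L_e are in Q. *)

lemma basis_indep: "basis E indep B \<Longrightarrow> indep B"
  unfolding basis_def by blast

context
  fixes E :: "'a set" and indep :: "'a set \<Rightarrow> bool"
  assumes matroid: "matroid E indep"
begin

lemma indep_subset_ground: "indep X \<Longrightarrow> X \<subseteq> E"
  using matroid unfolding matroid_def by blast

lemma indep_subset: "indep Y \<Longrightarrow> X \<subseteq> Y \<Longrightarrow> indep X"
  using matroid unfolding matroid_def by meson

lemma indep_augment: "indep X \<Longrightarrow> indep Y \<Longrightarrow> card X < card Y \<Longrightarrow> \<exists>e\<in>Y - X. indep (insert e X)"
  using matroid unfolding matroid_def by auto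

lemma finite_ground: "finite E"
  using matroid unfolding matroid_def by simp

lemma indep_finite: "indep X \<Longrightarrow> finite X"
  using finite_subset[OF indep_subset_ground finite_ground] .

lemma indep_extend_to_card:
  "indep I \<Longrightarrow> indep J \<Longrightarrow> card I \<le> card J \<Longrightarrow>
    \<exists>I'. I \<subseteq> I' \<and> I' \<subseteq> I \<union> J \<and> indep I' \<and> card I' = card J"
proof (induction "card J - card I" arbitrary: I)
  case 0
  then have "card I = card J" by simp
  then show ?case using \<open>indep I\<close> by blast
next
  case (Suc n)
  then have "card I < card J" by linarith
  then obtain x where x: "x \<in> J - I" "indep (insert x I)"
    using indep_augment Suc.prems(1,2) by blast
  moreover have "card (insert x I) = Suc (card I)"
    using x(1) indep_finite[OF Suc.prems(1)] by simp
  moreover have "n = card J - card (insert x I)" "card (insert x I) \<le> card J"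
    using calculation(3) Suc.hyps(2) \<open>card I < card J\<close> by simp_all
  ultimately obtain I' where "insert x I \<subseteq> I'" "I' \<subseteq> insert x I \<union> J" "indep I'" "card I' = card J"
    using Suc.hyps(1) Suc.prems(2) by blast
  then show ?case using x(1) by blast
qed

lemma basis_card_greatest:
  assumes "basis E indep B" "indep I"
  shows "card I \<le> card B"
proof (rule ccontr)
  assume "\<not> card I \<le> card B"
  then obtain x where "x \<in> I - B" "indep (insert x B)"
    using indep_augment[of B I] assms unfolding basis_def by auto
  then show False using assms(1) unfolding basis_def by auto
qed

lemma basis_if_card:
  assumes B: "basis E indep B" and X: "indep X" "card X = card B"
  shows "basis E indep X"
  unfolding basis_def
proof (intro conjI allI impI)
  fix Y assume Y: "indep Y \<and> X \<subseteq> Y"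
  then have "card Y \<le> card X" using basis_card_greatest[OF B] X(2) by simp
  then show "Y = X" using card_seteq[OF indep_finite] Y by blast
qed (fact X)

lemma dependent_contains_circuit:
  assumes "S \<subseteq> E" "\<not> indep S"
  shows "\<exists>C\<subseteq>S. circuit E indep C"
proof -
  have "finite S" using finite_subset[OF assms(1) finite_ground] .
  then show ?thesis using assms
  proof (induction S rule: finite_psubset_induct)
    case (psubset S)
    show ?case
    proof (cases "\<forall>X. X \<subset> S \<longrightarrow> indep X")
      case True
      then show ?thesis using psubset.prems unfolding circuit_def by blast
    next
      case False
      then obtain X where "X \<subset> S" "\<not> indep X" by blast
      then have "\<exists>C\<subseteq>X. circuit E indep C" using psubset.IH[of X] psubset.prems(1) by blast
      then show ?thesis using \<open>X \<subset> S\<close> by blast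
    qed
  qed
qed

lemma circuit_not_subset_indep: "circuit E indep C \<Longrightarrow> indep I \<Longrightarrow> \<not> C \<subseteq> I"
  unfolding circuit_def using indep_subset[of I C] by blast

lemma basis_exchange_circuit:
  assumes B: "basis E indep B" and e: "e \<notin> B"
    and C: "circuit E indep C" "C \<subseteq> insert e B" and f: "f \<in> C" "f \<noteq> e"
  shows "basis E indep (insert e B - {f})"
proof -
  have B_indep: "indep B" using basis_indep[OF B] .
  have Cf: "indep (C - {f})" using C f unfolding circuit_def by blast
  obtain I where I: "C - {f} \<subseteq> I" "I \<subseteq> (C - {f}) \<union> B" "indep I" "card I = card B"
    using indep_extend_to_card[OF Cf B_indep basis_card_greatest[OF B Cf]] by blast
  have "f \<notin> I" using I(1,3) circuit_not_subset_indep[OF C(1)] by blast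
  then have sub: "I \<subseteq> insert e B - {f}" using I C(2) by blast
  have "f \<in> B" using f C(2) by blast
  then have "card (insert e B - {f}) = card I"
    using e I(4) indep_finite[OF B_indep] by (simp add: card_Diff_singleton)
  then have "I = insert e B - {f}"
    using card_subset_eq[OF _ sub] indep_finite[OF B_indep] by simp
  then show ?thesis using basis_if_card[OF B I(3,4)] by simp
qed

lemma circuit_in_insert_basis_unique:
  assumes B: "basis E indep B" and e: "e \<notin> B"
    and C1: "circuit E indep C1" "C1 \<subseteq> insert e B"
    and C2: "circuit E indep C2" "C2 \<subseteq> insert e B"
  shows "C1 = C2"
proof (rule ccontr)
  assume "C1 \<noteq> C2"
  moreover have "\<not> C1 \<subset> C2" using C1(1) C2(1) unfolding circuit_def by blast
  ultimately obtain x where x: "x \<in> C1" "x \<notin> C2" by blast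
  have "\<not> C2 \<subseteq> B" using circuit_not_subset_indep[OF C2(1) basis_indep[OF B]] .
  then have "x \<noteq> e" using x(2) C2(2) by blast
  then have "indep (insert e B - {x})"
    using basis_indep[OF basis_exchange_circuit[OF B e C1 x(1)]] by simp
  moreover have "C2 \<subseteq> insert e B - {x}" using C2(2) x(2) by blast
  ultimately show False using circuit_not_subset_indep[OF C2(1)] by simp
qed

lemma fund_circuit:
  assumes B: "basis E indep B" and e: "e \<in> E - B"
  shows "circuit E indep (fund_circuit E indep B e)" "fund_circuit E indep B e \<subseteq> insert e B"
proof -
  have "insert e B \<subseteq> E" "\<not> indep (insert e B)"
    using e B indep_subset_ground[OF basis_indep[OF B]] unfolding basis_def by auto
  then obtain C where "C \<subseteq> insert e B" "circuit E indep C"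
    using dependent_contains_circuit by blast
  then have "\<exists>!C. circuit E indep C \<and> C \<subseteq> insert e B"
    using circuit_in_insert_basis_unique[OF B] e by (intro ex1I[of _ C]) auto
  then have "circuit E indep (fund_circuit E indep B e) \<and> fund_circuit E indep B e \<subseteq> insert e B"
    unfolding fund_circuit_def by (rule theI')
  then show "circuit E indep (fund_circuit E indep B e)" "fund_circuit E indep B e \<subseteq> insert e B"
    by blast+
qed

lemma basis_exchange_fund_circuit:
  assumes "basis E indep B" "e \<in> E - B" "f \<in> fund_circuit E indep B e - {e}"
  shows "basis E indep (insert e B - {f})"
  using basis_exchange_circuit[OF assms(1) _ fund_circuit[OF assms(1,2)]] assms(2,3) by blast

lemma fund_circuit_remove_subset_basis:
  assumes "basis E indep B" "e \<in> E - B"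
  shows "fund_circuit E indep B e - {e} \<subseteq> B"
  using fund_circuit(2)[OF assms] by blast

lemma fund_circuit_remove_subset_ground:
  assumes "basis E indep B" "e \<in> E - B"
  shows "fund_circuit E indep B e - {e} \<subseteq> E"
  using fund_circuit_remove_subset_basis[OF assms] indep_subset_ground[OF basis_indep[OF assms(1)]]
  by (rule order.trans)

lemma min_weight_basis_imp_fund_circuit_le:
  fixes w :: "'a \<Rightarrow> real"
  assumes B: "min_weight_basis E indep w B" and e: "e \<in> E - B"
    and f: "f \<in> fund_circuit E indep B e - {e}"
  shows "w f \<le> w e"
proof -
  have basis: "basis E indep B" using B unfolding min_weight_basis_def by blast
  then have "f \<in> B" using fund_circuit_remove_subset_basis[OF basis e] f by blast
  moreover have "finite B" using indep_finite[OF basis_indep[OF basis]] .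
  ultimately have "sum w (insert e B - {f}) = sum w B + w e - w f"
    using e by (simp add: sum_diff1)
  moreover have "sum w B \<le> sum w (insert e B - {f})"
    using B basis_exchange_fund_circuit[OF basis e f] unfolding min_weight_basis_def by blast
  ultimately show ?thesis by simp
qed

lemma fund_circuit_le_imp_exists_basis_closer:
  fixes w :: "'a \<Rightarrow> real"
  assumes B: "basis E indep B"
    and le: "\<forall>e\<in>E - B. \<forall>f\<in>fund_circuit E indep B e - {e}. w f \<le> w e"
    and B': "basis E indep B'" and new: "B' - B \<noteq> {}"
  shows "\<exists>B''. basis E indep B'' \<and> card (B'' - B) < card (B' - B) \<and> sum w B'' \<le> sum w B'"
proof -
  (* For a lightest e \<in> B' - B, some f \<in> C_e - {e} is missing from B'; adding f to B' and
     dropping some x \<in> B' - B from the fundamental circuit of f costs w f - w x \<le> w e - w x \<le> 0. *)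
  have indep_B: "indep B" and indep_B': "indep B'" using B B' by (simp_all add: basis_indep)
  have fin: "finite (B' - B)" using indep_finite[OF indep_B'] by simp
  obtain e where e: "e \<in> B' - B" and e_min: "\<forall>x\<in>B' - B. w e \<le> w x"
    using arg_min_if_finite(1)[OF fin new, of w] arg_min_least[OF fin new, of _ w] by blast
  have eE: "e \<in> E - B" using e indep_subset_ground[OF indep_B'] by blast
  have "\<not> fund_circuit E indep B e \<subseteq> B'"
    using circuit_not_subset_indep[OF fund_circuit(1)[OF B eE] indep_B'] .
  then obtain f where f: "f \<in> fund_circuit E indep B e - {e}" "f \<notin> B'" using e by blast
  have "f \<in> B" using f(1) fund_circuit_remove_subset_basis[OF B eE] by blast
  then have fE: "f \<in> E - B'" using f(2) indep_subset_ground[OF indep_B] by blast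
  have "\<not> fund_circuit E indep B' f \<subseteq> B"
    using circuit_not_subset_indep[OF fund_circuit(1)[OF B' fE] indep_B] .
  then obtain x where x: "x \<in> fund_circuit E indep B' f - {f}" "x \<notin> B" using \<open>f \<in> B\<close> by blast
  have "x \<in> B' - B" using x fund_circuit(2)[OF B' fE] by blast
  define B'' where "B'' = insert f B' - {x}"
  have "basis E indep B''" unfolding B''_def using basis_exchange_fund_circuit[OF B' fE x(1)] .
  moreover have "B'' - B = (B' - B) - {x}" unfolding B''_def using \<open>f \<in> B\<close> by blast
  then have "card (B'' - B) < card (B' - B)"
    using card_Diff1_less[OF fin \<open>x \<in> B' - B\<close>] by simp
  moreover have "sum w B'' = sum w B' + w f - w x"
    unfolding B''_def using indep_finite[OF indep_B'] fE \<open>x \<in> B' - B\<close> x(1)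
    by (simp add: sum_diff1)
  moreover have "w f \<le> w x"
    using le eE f(1) e_min \<open>x \<in> B' - B\<close> by (meson order.trans)
  ultimately show ?thesis by fastforce
qed

lemma fund_circuit_le_imp_min_weight_basis:
  fixes w :: "'a \<Rightarrow> real"
  assumes B: "basis E indep B"
    and le: "\<forall>e\<in>E - B. \<forall>f\<in>fund_circuit E indep B e - {e}. w f \<le> w e"
  shows "min_weight_basis E indep w B"
  unfolding min_weight_basis_def
proof (intro conjI allI impI)
  show "sum w B \<le> sum w B'" if "basis E indep B'" for B'
    using that
  proof (induction "card (B' - B)" arbitrary: B' rule: less_induct)
    case less
    show ?case
    proof (cases "B' - B = {}")
      case True
      then have "B' = B" using less.prems basis_indep[OF B] unfolding basis_def by blast
      then show ?thesis by simp
    next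
      case False
      then obtain B'' where "basis E indep B''" "card (B'' - B) < card (B' - B)" "sum w B'' \<le> sum w B'"
        using fund_circuit_le_imp_exists_basis_closer[OF B le less.prems] by blast
      then show ?thesis using less.hyps by fastforce
    qed
  qed
qed (fact B)

lemma min_weight_basis_iff_fund_circuit_le:
  fixes w :: "'a \<Rightarrow> real"
  assumes "basis E indep B"
  shows "min_weight_basis E indep w B \<longleftrightarrow>
    (\<forall>e\<in>E - B. \<forall>f\<in>fund_circuit E indep B e - {e}. w f \<le> w e)"
  using assms min_weight_basis_imp_fund_circuit_le fund_circuit_le_imp_min_weight_basis by blast

end

lemma bounded_interval_bdd:
  assumes "bounded_interval I"
  shows "bdd_above I" "bdd_below I"
proof -
  obtain a b where "I = {a..b} \<or> I = {a<..b} \<or> I = {a..<b} \<or> I = {a<..<b}"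
    using assms unfolding bounded_interval_def by blast
  then have "I \<subseteq> {a..b}" by auto
  then show "bdd_above I" "bdd_below I"
    by (auto intro: bdd_above_mono bdd_below_mono)
qed

lemma uncertainty_area_bdd:
  assumes "uncertainty_area S"
  shows "bdd_above S" "bdd_below S"
proof -
  obtain \<I> where "finite \<I>" "\<forall>I\<in>\<I>. bounded_interval I" "S = \<Union>\<I>"
    using assms unfolding uncertainty_area_def by blast
  then show "bdd_above S" "bdd_below S"
    using bdd_above_UN[of \<I> id] bdd_below_UN[of \<I> id] bounded_interval_bdd by auto
qed

lemma weighted_uncertainty_matroidD:
  assumes "weighted_uncertainty_matroid E indep A w"
  shows "matroid E indep" "\<forall>x\<in>E. bdd_above (A x) \<and> bdd_below (A x) \<and> w x \<in> A x"
  using assms uncertainty_area_bdd unfolding weighted_uncertainty_matroid_def by auto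

lemma mem_le_upper: "bdd_above (A x) \<Longrightarrow> y \<in> A x \<Longrightarrow> y \<le> upper A x"
  unfolding upper_def by (rule cSup_upper)

lemma lower_le_mem: "bdd_below (A x) \<Longrightarrow> y \<in> A x \<Longrightarrow> lower A x \<le> y"
  unfolding lower_def by (rule cInf_lower)

(* The supremum and the infimum of w' f over all assignments w' consistent with Q. *)
definition upper_given :: "'a set \<Rightarrow> ('a \<Rightarrow> real set) \<Rightarrow> ('a \<Rightarrow> real) \<Rightarrow> 'a \<Rightarrow> real" where
  "upper_given Q A w f = (if f \<in> Q then w f else upper A f)"

definition lower_given :: "'a set \<Rightarrow> ('a \<Rightarrow> real set) \<Rightarrow> ('a \<Rightarrow> real) \<Rightarrow> 'a \<Rightarrow> real" where
  "lower_given Q A w e = (if e \<in> Q then w e else lower A e)"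

lemma upper_given_gt:
  assumes "bdd_above (A f)" "w f \<in> A f" "d < upper_given Q A w f"
  obtains x where "x \<in> A f" "f \<in> Q \<Longrightarrow> x = w f" "d < x"
proof (cases "f \<in> Q")
  case False
  then have "d < Sup (A f)" using assms(3) unfolding upper_given_def upper_def by simp
  then show ?thesis using that False less_cSup_iff[OF _ assms(1)] assms(2) by blast
qed (use assms that in \<open>auto simp: upper_given_def\<close>)

lemma lower_given_lt:
  assumes "bdd_below (A e)" "w e \<in> A e" "lower_given Q A w e < d"
  obtains y where "y \<in> A e" "e \<in> Q \<Longrightarrow> y = w e" "y < d"
proof (cases "e \<in> Q")
  case False
  then have "Inf (A e) < d" using assms(3) unfolding lower_given_def lower_def by simp
  then show ?thesis using that False cInf_less_iff[OF _ assms(1)] assms(2) by blast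
qed (use assms that in \<open>auto simp: lower_given_def\<close>)

lemma consistent_le_upper_given:
  assumes "consistent_with E A w Q w'" "f \<in> E" "bdd_above (A f)"
  shows "w' f \<le> upper_given Q A w f"
  using assms mem_le_upper[of A f]
  unfolding consistent_with_def weight_assignment_def upper_given_def by auto

lemma lower_given_le_consistent:
  assumes "consistent_with E A w Q w'" "e \<in> E" "bdd_below (A e)"
  shows "lower_given Q A w e \<le> w' e"
  using assms lower_le_mem[of A e]
  unfolding consistent_with_def weight_assignment_def lower_given_def by auto

lemma consistent_le_iff_upper_given_le_lower_given:
  assumes A: "\<forall>x\<in>E. bdd_above (A x) \<and> bdd_below (A x) \<and> w x \<in> A x"
    and e: "e \<in> E" and f: "f \<in> E" and "e \<noteq> f"
  shows "(\<forall>w'. consistent_with E A w Q w' \<longrightarrow> w' f \<le> w' e) \<longleftrightarrow>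
    upper_given Q A w f \<le> lower_given Q A w e"
proof
  assume le: "\<forall>w'. consistent_with E A w Q w' \<longrightarrow> w' f \<le> w' e"
  show "upper_given Q A w f \<le> lower_given Q A w e"
  proof (rule ccontr)
    assume "\<not> ?thesis"
    then obtain x where x: "x \<in> A f" "f \<in> Q \<Longrightarrow> x = w f" "lower_given Q A w e < x"
      using upper_given_gt[of A f w] A f by (metis not_le)
    then obtain y where y: "y \<in> A e" "e \<in> Q \<Longrightarrow> y = w e" "y < x"
      using lower_given_lt[of A e w] A e by metis
    have "consistent_with E A w Q (w(e := y, f := x))"
      using A x y unfolding consistent_with_def weight_assignment_def by auto
    then show False using le y(3) \<open>e \<noteq> f\<close> by fastforce
  qed
next
  show "\<forall>w'. consistent_with E A w Q w' \<longrightarrow> w' f \<le> w' e"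
    if "upper_given Q A w f \<le> lower_given Q A w e"
    using that A e f consistent_le_upper_given lower_given_le_consistent by (meson order.trans)
qed

lemma certificate_iff_upper_given_le_lower_given:
  assumes "weighted_uncertainty_matroid E indep A w" and B: "basis E indep B"
  shows "certificate E indep A w Q B \<longleftrightarrow>
    (\<forall>e\<in>E - B. \<forall>f\<in>fund_circuit E indep B e - {e}. upper_given Q A w f \<le> lower_given Q A w e)"
proof -
  note M = weighted_uncertainty_matroidD[OF assms(1)]
  have "certificate E indep A w Q B \<longleftrightarrow>
      (\<forall>e\<in>E - B. \<forall>f\<in>fund_circuit E indep B e - {e}.
         \<forall>w'. consistent_with E A w Q w' \<longrightarrow> w' f \<le> w' e)"
    unfolding certificate_def min_weight_basis_iff_fund_circuit_le[OF M(1) B] by blast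
  also have "\<dots> \<longleftrightarrow>
      (\<forall>e\<in>E - B. \<forall>f\<in>fund_circuit E indep B e - {e}. upper_given Q A w f \<le> lower_given Q A w e)"
  proof (intro ball_cong refl)
    fix e f assume e: "e \<in> E - B" and f: "f \<in> fund_circuit E indep B e - {e}"
    have "f \<in> E" using f fund_circuit_remove_subset_ground[OF M(1) B e] by blast
    then show "(\<forall>w'. consistent_with E A w Q w' \<longrightarrow> w' f \<le> w' e) \<longleftrightarrow>
        upper_given Q A w f \<le> lower_given Q A w e"
      using consistent_le_iff_upper_given_le_lower_given[OF M(2)] e f by blast
  qed
  finally show ?thesis .
qed

lemma upper_given_le_lower_given_iff_cases:
  fixes w :: "'a \<Rightarrow> real"
  assumes w_le_U: "\<forall>f\<in>C. w f \<le> upper A f" and L_le_w: "lower A e \<le> w e"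
    and w_le_we: "\<forall>f\<in>C. w f \<le> w e"
  defines "F \<equiv> {f\<in>C. upper A f > lower A e}" and "Fh \<equiv> {f\<in>C. upper A f > w e}"
  shows "(\<forall>f\<in>C. upper_given Q A w f \<le> lower_given Q A w e) \<longleftrightarrow>
    ((\<forall>f\<in>C. w e \<ge> upper A f) \<and> (\<exists>f'\<in>C. w f' > lower A e) \<longrightarrow> e \<in> Q) \<and>
    ((\<forall>f\<in>C. w e \<ge> upper A f) \<and> (\<forall>f\<in>C. w f \<le> lower A e) \<longrightarrow> e \<in> Q \<or> F \<subseteq> Q) \<and>
    ((\<exists>f\<in>C. w e < upper A f) \<and> (\<exists>f'\<in>C. w f' > lower A e) \<longrightarrow> Fh \<union> {e} \<subseteq> Q) \<and>
    ((\<exists>f\<in>C. w e < upper A f) \<and> (\<forall>f'\<in>C. w f' \<le> lower A e) \<longrightarrow> F \<subseteq> Q \<or> Fh \<union> {e} \<subseteq> Q)"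
    (is "?pairs \<longleftrightarrow> ?cases")
proof -
  have "?pairs \<longleftrightarrow> (if e \<in> Q then Fh \<subseteq> Q else (\<forall>f\<in>C. w f \<le> lower A e) \<and> F \<subseteq> Q)"
    using w_le_U w_le_we unfolding upper_given_def lower_given_def F_def Fh_def
    by (force simp: not_less)
  moreover have "Fh \<subseteq> F"
    using L_le_w unfolding F_def Fh_def by auto
  then have "?cases \<longleftrightarrow> (if e \<in> Q then Fh \<subseteq> Q else (\<forall>f\<in>C. w f \<le> lower A e) \<and> F \<subseteq> Q)"
    unfolding Fh_def by (auto simp: not_less)
  ultimately show ?thesis by simp
qed

theorem lemma25:
  fixes E :: "'a set" and indep :: "'a set \<Rightarrow> bool"
    and A :: "'a \<Rightarrow> real set" and w :: "'a \<Rightarrow> real" and B Q :: "'a set"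
  assumes "weighted_uncertainty_matroid E indep A w"
    and "min_weight_basis E indep w B"
    and "Q \<subseteq> E"
  shows "certificate E indep A w Q B \<longleftrightarrow>
    (\<forall>e\<in>E - B.
       let C = fund_circuit E indep B e - {e};
           L = lower A; U = upper A;
           F = {f\<in>C. U f > L e};
           Fh = {f\<in>C. U f > w e}
       in ((\<forall>f\<in>C. w e \<ge> U f) \<and> (\<exists>f'\<in>C. w f' > L e) \<longrightarrow> e \<in> Q) \<and>
          ((\<forall>f\<in>C. w e \<ge> U f) \<and> (\<forall>f\<in>C. w f \<le> L e) \<longrightarrow> e \<in> Q \<or> F \<subseteq> Q) \<and>
          ((\<exists>f\<in>C. w e < U f) \<and> (\<exists>f'\<in>C. w f' > L e) \<longrightarrow> Fh \<union> {e} \<subseteq> Q) \<and>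
          ((\<exists>f\<in>C. w e < U f) \<and> (\<forall>f'\<in>C. w f' \<le> L e) \<longrightarrow> F \<subseteq> Q \<or> Fh \<union> {e} \<subseteq> Q))"
proof -
  note M = weighted_uncertainty_matroidD[OF assms(1)]
  have B: "basis E indep B" using assms(2) unfolding min_weight_basis_def by blast
  show ?thesis
    unfolding certificate_iff_upper_given_le_lower_given[OF assms(1) B] Let_def
  proof (intro ball_cong refl upper_given_le_lower_given_iff_cases)
    fix e assume "e \<in> E - B"
    then show "\<forall>f\<in>fund_circuit E indep B e - {e}. w f \<le> upper A f"
      using fund_circuit_remove_subset_ground[OF M(1) B] M(2) mem_le_upper[of A] by blast
  next
    fix e assume "e \<in> E - B"
    then show "lower A e \<le> w e"
      using M(2) lower_le_mem[of A e] by blast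
  next
    fix e assume "e \<in> E - B"
    then show "\<forall>f\<in>fund_circuit E indep B e - {e}. w f \<le> w e"
      using min_weight_basis_imp_fund_circuit_le[OF M(1) assms(2)] by blast
  qed
qed

end
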